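(* Let $q\ge1$, $p>0$, let $A=(a_{ijk})_{i,j\le n,k\le m}$ be a real array and $U\subset B^n_2+\sqrt pB^n_1$. Then \[ \mathbb{E}^g\sup_{x\in U}\mathbb{E}^{g'}\sup_{t\in B_{q'}}\sum_{ijk}a_{ijk}g_ig'_ix_jt_k\le C(q)\sqrt{W_A}\,\sup_{x\in U}\varphi_A(x), \] where $C(q)$ depends only on $q$.
   Context: $(g_i),(g'_i)$ are independent sequences of i.i.d. standard Gaussians; $\mathbb{E}^g,\mathbb{E}^{g'}$ denote integration with respect to each. $q'$ is the Hölder conjugate of $q$ and $B_{q'}=\{t\in\mathbb{R}^m:\sum_k|t_k|^{q'}\le1\}$ (the sup-norm ball if $q=1$). $W_A=\big(\sum_k(\sum_{i,j}a_{ijk}^2)^{q/2}\big)^{1/q}$ and $\varphi_A(x)=\Big(\sum_k\Big(\sum_i\frac{(\sum_ja_{ijk}x_j)^4}{\sum_ja_{ijk}^2}\Big)^{q/2}\Big)^{1/(2q)}$, terms with $\sum_ja_{ijk}^2=0$ being omitted. *)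

theory Defs
  imports "HOL-Probability.Probability"
begin

text \<open>Vectors of R^n are represented as functions nat => real vanishing outside {..<n}.\<close>

definition gauss_vec :: "nat \<Rightarrow> (nat \<Rightarrow> real) measure" where
  "gauss_vec n = PiM {..<n} (\<lambda>_. std_normal_distribution)"

definition ball2_plus_ball1 :: "nat \<Rightarrow> real \<Rightarrow> (nat \<Rightarrow> real) set" where
  "ball2_plus_ball1 n p = {x. \<exists>y z. (\<forall>j. x j = y j + z j)
      \<and> (\<forall>j\<ge>n. y j = 0 \<and> z j = 0)
      \<and> (\<Sum>j<n. (y j)\<^sup>2) \<le> 1 \<and> (\<Sum>j<n. \<bar>z j\<bar>) \<le> sqrt p}"

text \<open>Hoelder conjugate exponent q' of q (q >= 1); for q = 1 the ball is the sup-norm ball.\<close>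
definition conj_ball :: "nat \<Rightarrow> real \<Rightarrow> (nat \<Rightarrow> real) set" where
  "conj_ball m q = {t. (\<forall>k\<ge>m. t k = 0) \<and>
     (if q = 1 then (\<forall>k<m. \<bar>t k\<bar> \<le> 1)
      else (\<Sum>k<m. \<bar>t k\<bar> powr (q / (q - 1))) \<le> 1)}"

definition W_A :: "nat \<Rightarrow> nat \<Rightarrow> real \<Rightarrow> (nat \<Rightarrow> nat \<Rightarrow> nat \<Rightarrow> real) \<Rightarrow> real" where
  "W_A n m q a = (\<Sum>k<m. (\<Sum>i<n. \<Sum>j<n. (a i j k)\<^sup>2) powr (q / 2)) powr (1 / q)"

definition phi_A :: "nat \<Rightarrow> nat \<Rightarrow> real \<Rightarrow> (nat \<Rightarrow> nat \<Rightarrow> nat \<Rightarrow> real) \<Rightarrow> (nat \<Rightarrow> real) \<Rightarrow> real" where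
  "phi_A n m q a x = (\<Sum>k<m. (\<Sum>i\<in>{i\<in>{..<n}. (\<Sum>j<n. (a i j k)\<^sup>2) \<noteq> 0}.
       (\<Sum>j<n. a i j k * x j) ^ 4 / (\<Sum>j<n. (a i j k)\<^sup>2)) powr (q / 2)) powr (1 / (2 * q))"

end

theory Submission
  imports Defs
begin

text \<open>
  Fix g and x, and write b(i,k) = sum_j a(i,j,k) x(j) and s(i,k) = sum_j a(i,j,k)^2.
  The inner sum is sum_k t(k) Y(k) with Y(k) = sum_i g(i) b(i,k) g'(i), so by Hoelder its
  supremum over the unit ball of l_q' is at most the l_q norm of Y. Each Y(k) is a centred
  Gaussian of variance sum_i g(i)^2 b(i,k)^2; Jensen therefore bounds the g'-expectation of that
  norm by (E|gamma|^q sum_k (sum_i g(i)^2 b(i,k)^2)^(q/2))^(1/q), gamma standard Gaussian.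
  Cauchy-Schwarz, first in i with weights s(i,k) and then in k, splits the last sum into
  G(g)^(1/2) phi_A(x)^q with G(g) = sum_k (sum_i s(i,k) g(i)^4)^(q/2).
  Now the supremum over x only affects phi_A(x), and
  E G^(1/(2q)) <= (E G)^(1/(2q)) <= C(q) W_A^(1/2),
  because a weighted power mean gives E (sum_i s(i) g(i)^4)^r <= C(r) (sum_i s(i))^r.
\<close>

subsection \<open>Elementary inequalities\<close>

lemma Holder_inequality_sum:
  fixes u v :: "'a \<Rightarrow> real"
  assumes K: "finite K" and p: "p > 1" and r: "r > 1" and pr: "1/p + 1/r = 1"
    and u: "\<And>k. 0 \<le> u k" and v: "\<And>k. 0 \<le> v k"
  shows "(\<Sum>k\<in>K. u k * v k) \<le> (\<Sum>k\<in>K. u k powr p) powr (1/p) * (\<Sum>k\<in>K. v k powr r) powr (1/r)"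
proof -
  define A where "A = (\<Sum>k\<in>K. u k powr p)"
  define B where "B = (\<Sum>k\<in>K. v k powr r)"
  have A0: "0 \<le> A" "0 \<le> B" unfolding A_def B_def by (auto intro: sum_nonneg)
  show ?thesis
  proof (cases "A = 0 \<or> B = 0")
    case True
    then have "\<forall>k\<in>K. u k = 0 \<or> v k = 0"
      using K u v unfolding A_def B_def by (auto simp: sum_nonneg_eq_0_iff)
    then have "(\<Sum>k\<in>K. u k * v k) = 0" by (intro sum.neutral) auto
    then show ?thesis by (simp add: A_def[symmetric] B_def[symmetric])
  next
    case False
    then have Ap: "0 < A" "0 < B" using A0 by auto
    define \<alpha> where "\<alpha> = A powr (1/p)"
    define \<beta> where "\<beta> = B powr (1/r)"
    have ab: "0 < \<alpha>" "0 < \<beta>" unfolding \<alpha>_def \<beta>_def using Ap by auto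
    have "(\<Sum>k\<in>K. (u k / \<alpha>) * (v k / \<beta>)) \<le> (\<Sum>k\<in>K. (u k / \<alpha>) powr p / p + (v k / \<beta>) powr r / r)"
      using p r pr u v ab by (intro sum_mono Youngs_inequality) auto
    also have "\<dots> = (\<Sum>k\<in>K. u k powr p) / (\<alpha> powr p) / p + (\<Sum>k\<in>K. v k powr r) / (\<beta> powr r) / r"
      using u v ab by (simp add: powr_divide sum.distrib sum_divide_distrib)
    also have "\<alpha> powr p = A" unfolding \<alpha>_def using Ap p by (simp add: powr_powr)
    also have "\<beta> powr r = B" unfolding \<beta>_def using Ap r by (simp add: powr_powr)
    also have "(\<Sum>k\<in>K. u k powr p) / A / p + (\<Sum>k\<in>K. v k powr r) / B / r = 1"
      using Ap pr by (simp add: A_def[symmetric] B_def[symmetric])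
    finally have "(\<Sum>k\<in>K. (u k / \<alpha>) * (v k / \<beta>)) \<le> 1" .
    moreover have "(\<Sum>k\<in>K. u k * v k) = \<alpha> * \<beta> * (\<Sum>k\<in>K. (u k / \<alpha>) * (v k / \<beta>))"
      using ab by (simp add: sum_distrib_left)
    ultimately have "(\<Sum>k\<in>K. u k * v k) \<le> \<alpha> * \<beta>"
      using ab by (simp add: mult_left_le)
    then show ?thesis by (simp add: \<alpha>_def \<beta>_def A_def B_def)
  qed
qed

corollary Cauchy_Schwarz_sum_powr:
  fixes u v :: "'a \<Rightarrow> real"
  assumes "finite K" and "\<And>k. 0 \<le> u k" and "\<And>k. 0 \<le> v k"
  shows "(\<Sum>k\<in>K. u k * v k) \<le> (\<Sum>k\<in>K. u k powr 2) powr (1/2) * (\<Sum>k\<in>K. v k powr 2) powr (1/2)"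
  using Holder_inequality_sum[OF assms(1) _ _ _ assms(2,3), of 2 2] by simp

lemma powr_weighted_mean_le:
  fixes w y :: "'a \<Rightarrow> real"
  assumes K: "finite K" and R: "1 \<le> R" and w: "\<And>k. 0 \<le> w k" and w1: "(\<Sum>k\<in>K. w k) = 1"
    and y: "\<And>k. 0 \<le> y k"
  shows "(\<Sum>k\<in>K. w k * y k) powr R \<le> (\<Sum>k\<in>K. w k * y k powr R)"
proof (cases "R = 1")
  case True then show ?thesis using w y by (simp add: sum_nonneg)
next
  case False
  then have R1: "R > 1" using R by simp
  define R' where "R' = R / (R - 1)"
  have R'1: "R' > 1" unfolding R'_def using R1 by (simp add: field_simps)
  have RR: "1/R' + 1/R = 1" unfolding R'_def using R1 by (simp add: field_simps)
  have "(\<Sum>k\<in>K. w k * y k) = (\<Sum>k\<in>K. w k powr (1/R') * (w k powr (1/R) * y k))"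
  proof (rule sum.cong)
    fix k
    have "w k powr (1/R') * w k powr (1/R) = w k"
      using w[of k] RR by (cases "w k = 0") (simp_all add: powr_add[symmetric])
    then show "w k * y k = w k powr (1/R') * (w k powr (1/R) * y k)"
      by (simp add: mult.assoc[symmetric])
  qed simp
  also have "\<dots> \<le> (\<Sum>k\<in>K. (w k powr (1/R')) powr R') powr (1/R')
      * (\<Sum>k\<in>K. (w k powr (1/R) * y k) powr R) powr (1/R)"
    by (rule Holder_inequality_sum[OF K R'1 R1 RR]) (auto intro: mult_nonneg_nonneg y)
  also have "(\<Sum>k\<in>K. (w k powr (1/R')) powr R') = 1"
    using R'1 w w1 by (simp add: powr_powr)
  also have "(\<Sum>k\<in>K. (w k powr (1/R) * y k) powr R) = (\<Sum>k\<in>K. w k * y k powr R)"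
    using R1 w y by (simp add: powr_mult powr_powr)
  finally have "(\<Sum>k\<in>K. w k * y k) \<le> (\<Sum>k\<in>K. w k * y k powr R) powr (1/R)" by simp
  then have "(\<Sum>k\<in>K. w k * y k) powr R \<le> ((\<Sum>k\<in>K. w k * y k powr R) powr (1/R)) powr R"
    using w y R1 by (intro powr_mono2) (auto intro: sum_nonneg)
  also have "\<dots> = (\<Sum>k\<in>K. w k * y k powr R)"
    using R1 w y by (simp add: powr_powr sum_nonneg)
  finally show ?thesis .
qed

lemma powr_le_one_plus_powr:
  fixes z r R :: real
  assumes "0 \<le> z" "0 < r" "r \<le> R"
  shows "z powr r \<le> 1 + z powr R"
proof (cases "z \<le> 1")
  case True
  then have "z powr r \<le> 1" using assms by (simp add: powr_le1)
  then show ?thesis by (smt (verit) powr_ge_zero)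
next
  case False
  then have "z powr r \<le> z powr R" using assms by (intro powr_mono) auto
  then show ?thesis by simp
qed

text \<open>For r < 1 the power is concave; passing to the exponent max r 1 costs only an additive 1.\<close>

lemma weighted_quartic_powr_le:
  fixes w y :: "'a \<Rightarrow> real"
  assumes K: "finite K" and w: "\<And>k. 0 \<le> w k" and w1: "(\<Sum>k\<in>K. w k) = 1" and r: "0 < r"
  shows "(\<Sum>k\<in>K. w k * y k ^ 4) powr r \<le> 1 + (\<Sum>k\<in>K. w k * \<bar>y k\<bar> powr (4 * max r 1))"
proof -
  have "(\<Sum>k\<in>K. w k * y k ^ 4) powr r \<le> 1 + (\<Sum>k\<in>K. w k * y k ^ 4) powr (max r 1)"
    using w r by (intro powr_le_one_plus_powr) (auto intro: sum_nonneg)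
  also have "\<dots> \<le> 1 + (\<Sum>k\<in>K. w k * (y k ^ 4) powr (max r 1))"
    using K w w1 by (intro add_left_mono powr_weighted_mean_le) auto
  also have "(\<Sum>k\<in>K. w k * (y k ^ 4) powr (max r 1)) = (\<Sum>k\<in>K. w k * \<bar>y k\<bar> powr (4 * max r 1))"
  proof (rule sum.cong[OF refl])
    fix k
    have "y k ^ 4 = \<bar>y k\<bar> powr 4"
      by (cases "y k = 0") (auto simp: powr_realpow)
    then show "w k * (y k ^ 4) powr (max r 1) = w k * \<bar>y k\<bar> powr (4 * max r 1)"
      by (simp only: powr_powr)
  qed
  finally show ?thesis .
qed

lemma powr_tangent_bound:
  fixes f l r :: real
  assumes f: "0 \<le> f" and l: "0 < l" and r: "1 \<le> r"
  shows "f \<le> (1/r) * (l powr (1 - r) * f powr r) + (1 - 1/r) * l"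
proof (cases "f = 0")
  case True then show ?thesis using l r by simp
next
  case False
  then have fp: "0 < f" using f by simp
  have "(l powr (1 - r) * f powr r) powr (1/r) = l powr ((1 - r)/r) * f"
    using l fp r by (simp add: powr_mult powr_powr)
  moreover have "l powr ((1 - r)/r) * l powr (1 - 1/r) = 1"
    using l r by (simp add: powr_add[symmetric] field_simps)
  ultimately have "(l powr (1 - r) * f powr r) powr (1/r) * l powr (1 - 1/r) = f"
    by (metis mult.commute mult.left_commute mult_1)
  moreover have "(l powr (1 - r) * f powr r) powr (1/r) * l powr (1 - 1/r)
      \<le> (1/r) * (l powr (1 - r) * f powr r) + (1 - 1/r) * l"
    using r l fp by (intro Youngs_inequality_0) auto
  ultimately show ?thesis by simp
qed

text \<open>Jensen's inequality for f \<mapsto> f powr r, integrated along its tangent at B powr (1/r); unlike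
  jensens_inequality it needs no integrability, as it is stated for nonnegative integrals.\<close>

lemma (in prob_space) nn_integral_le_root_of_powr_bound:
  fixes f :: "'a \<Rightarrow> real"
  assumes fm: "f \<in> borel_measurable M" and f0: "\<And>x. 0 \<le> f x" and r: "1 \<le> r"
    and B: "(\<integral>\<^sup>+x. ennreal (f x powr r) \<partial>M) \<le> ennreal B" and B0: "0 \<le> B"
  shows "(\<integral>\<^sup>+x. ennreal (f x) \<partial>M) \<le> ennreal (B powr (1/r))"
proof (cases "B = 0")
  case True
  then have "AE x in M. ennreal (f x powr r) = 0"
    using B fm by (subst nn_integral_0_iff_AE[symmetric]) auto
  then have "AE x in M. ennreal (f x) = 0"
    by eventually_elim (use f0 in auto)
  then have "(\<integral>\<^sup>+x. ennreal (f x) \<partial>M) = (\<integral>\<^sup>+x. 0 \<partial>M)"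
    by (rule nn_integral_cong_AE)
  then show ?thesis by simp
next
  case False
  then have Bp: "0 < B" using B0 by simp
  define l where "l = B powr (1/r)"
  have lp: "0 < l" unfolding l_def using Bp by simp
  define c where "c = (1/r) * l powr (1 - r)"
  have c0: "0 \<le> c" unfolding c_def using r by simp
  have d0: "0 \<le> (1 - 1/r) * l" using r lp by (simp add: field_simps)
  have "(\<integral>\<^sup>+x. ennreal (f x) \<partial>M) \<le> (\<integral>\<^sup>+x. ennreal c * ennreal (f x powr r) + ennreal ((1 - 1/r) * l) \<partial>M)"
  proof (rule nn_integral_mono)
    fix x
    have "f x \<le> c * f x powr r + (1 - 1/r) * l"
      using powr_tangent_bound[OF f0 lp r] unfolding c_def by (simp add: mult.assoc)
    then show "ennreal (f x) \<le> ennreal c * ennreal (f x powr r) + ennreal ((1 - 1/r) * l)"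
      using c0 d0 by (simp add: ennreal_mult[symmetric] ennreal_plus[symmetric] del: ennreal_plus)
  qed
  also have "\<dots> = ennreal c * (\<integral>\<^sup>+x. ennreal (f x powr r) \<partial>M) + ennreal ((1 - 1/r) * l)"
    using fm by (subst nn_integral_add) (auto simp: nn_integral_cmult emeasure_space_1)
  also have "\<dots> \<le> ennreal c * ennreal B + ennreal ((1 - 1/r) * l)"
    by (intro add_mono mult_left_mono B) auto
  also have "\<dots> = ennreal (c * B + (1 - 1/r) * l)"
    using c0 d0 Bp by (simp add: ennreal_mult ennreal_plus)
  also have "c * B + (1 - 1/r) * l = l"
  proof -
    have "l powr (1 - r) * B = B powr ((1 - r)/r + 1)"
      unfolding l_def using Bp r by (simp add: powr_powr powr_add)
    also have "(1 - r)/r + 1 = 1/r" using r by (simp add: field_simps)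
    finally show ?thesis unfolding c_def l_def using r by (simp add: field_simps)
  qed
  finally show ?thesis by (simp add: l_def)
qed

lemma sum_mult_le_lq_norm_conj_ball:
  fixes Y :: "nat \<Rightarrow> real"
  assumes q: "1 \<le> q" and t: "t \<in> conj_ball m q"
  shows "(\<Sum>k<m. t k * Y k) \<le> (\<Sum>k<m. \<bar>Y k\<bar> powr q) powr (1/q)"
proof -
  have "(\<Sum>k<m. t k * Y k) \<le> (\<Sum>k<m. \<bar>t k\<bar> * \<bar>Y k\<bar>)"
    by (intro sum_mono) (metis abs_ge_self abs_mult)
  also have "\<dots> \<le> (\<Sum>k<m. \<bar>Y k\<bar> powr q) powr (1/q)"
  proof (cases "q = 1")
    case True
    then have "\<bar>t k\<bar> * \<bar>Y k\<bar> \<le> \<bar>Y k\<bar>" if "k < m" for k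
      using t that by (simp add: conj_ball_def mult_left_le_one_le)
    then have "(\<Sum>k<m. \<bar>t k\<bar> * \<bar>Y k\<bar>) \<le> (\<Sum>k<m. \<bar>Y k\<bar>)"
      by (intro sum_mono) auto
    then show ?thesis using True by (simp add: sum_nonneg)
  next
    case False
    define q' where "q' = q / (q - 1)"
    have q1: "q > 1" using q False by simp
    then have q'1: "q' > 1" and qq: "1/q' + 1/q = 1"
      unfolding q'_def by (simp_all add: field_simps)
    have tb: "(\<Sum>k<m. \<bar>t k\<bar> powr q') \<le> 1" using t False by (simp add: conj_ball_def q'_def)
    have "(\<Sum>k<m. \<bar>t k\<bar> * \<bar>Y k\<bar>)
        \<le> (\<Sum>k<m. \<bar>t k\<bar> powr q') powr (1/q') * (\<Sum>k<m. \<bar>Y k\<bar> powr q) powr (1/q)"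
      by (rule Holder_inequality_sum[OF _ q'1 q1 qq]) auto
    also have "\<dots> \<le> (\<Sum>k<m. \<bar>Y k\<bar> powr q) powr (1/q)"
      using tb q'1 by (intro mult_left_le_one_le powr_le1) (auto simp: sum_nonneg)
    finally show ?thesis .
  qed
  finally show ?thesis .
qed

lemma sum_square_le_weighted_quartic:
  fixes g b s :: "nat \<Rightarrow> real"
  assumes s0: "\<And>i. 0 \<le> s i" and sb: "\<And>i. s i = 0 \<Longrightarrow> b i = 0"
  shows "(\<Sum>i<n. (g i * b i)\<^sup>2)
    \<le> (\<Sum>i<n. s i * g i ^ 4) powr (1/2) * (\<Sum>i\<in>{i\<in>{..<n}. s i \<noteq> 0}. b i ^ 4 / s i) powr (1/2)"
proof -
  let ?I = "{i\<in>{..<n}. s i \<noteq> 0}"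
  have pos: "s i > 0" if "i \<in> ?I" for i using that s0[of i] by auto
  have "(\<Sum>i<n. (g i * b i)\<^sup>2) = (\<Sum>i\<in>?I. (g i * b i)\<^sup>2)"
    by (rule sum.mono_neutral_right) (auto simp: sb)
  also have "\<dots> = (\<Sum>i\<in>?I. ((g i)\<^sup>2 * sqrt (s i)) * ((b i)\<^sup>2 / sqrt (s i)))"
    using pos by (intro sum.cong) (auto simp: power_mult_distrib)
  also have "\<dots> \<le> (\<Sum>i\<in>?I. ((g i)\<^sup>2 * sqrt (s i)) powr 2) powr (1/2)
      * (\<Sum>i\<in>?I. ((b i)\<^sup>2 / sqrt (s i)) powr 2) powr (1/2)"
    by (rule Cauchy_Schwarz_sum_powr) (auto simp: s0)
  also have "(\<Sum>i\<in>?I. ((g i)\<^sup>2 * sqrt (s i)) powr 2) = (\<Sum>i\<in>?I. s i * g i ^ 4)"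
    using s0 by (intro sum.cong) (auto simp: powr_numeral power_mult_distrib simp flip: power_mult)
  also have "\<dots> = (\<Sum>i<n. s i * g i ^ 4)"
    by (rule sum.mono_neutral_left) auto
  also have "(\<Sum>i\<in>?I. ((b i)\<^sup>2 / sqrt (s i)) powr 2) = (\<Sum>i\<in>?I. b i ^ 4 / s i)"
    using s0 by (intro sum.cong) (auto simp: powr_numeral power_divide simp flip: power_mult)
  finally show ?thesis .
qed

lemma sum_powr_sum_square_le_weighted_quartic:
  fixes g :: "nat \<Rightarrow> real" and b s :: "nat \<Rightarrow> nat \<Rightarrow> real"
  assumes q: "1 \<le> q" and s0: "\<And>i k. 0 \<le> s i k" and sb: "\<And>i k. s i k = 0 \<Longrightarrow> b i k = 0"
  shows "(\<Sum>k<m. (\<Sum>i<n. (g i * b i k)\<^sup>2) powr (q/2))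
    \<le> (\<Sum>k<m. (\<Sum>i<n. s i k * g i ^ 4) powr (q/2)) powr (1/2)
      * (\<Sum>k<m. (\<Sum>i\<in>{i\<in>{..<n}. s i k \<noteq> 0}. b i k ^ 4 / s i k) powr (q/2)) powr (1/2)"
proof -
  define P where "P k = (\<Sum>i<n. s i k * g i ^ 4)" for k
  define Q where "Q k = (\<Sum>i\<in>{i\<in>{..<n}. s i k \<noteq> 0}. b i k ^ 4 / s i k)" for k
  have P0: "0 \<le> P k" for k unfolding P_def by (auto intro!: sum_nonneg simp: s0)
  have Q0: "0 \<le> Q k" for k unfolding Q_def by (auto intro!: sum_nonneg divide_nonneg_nonneg simp: s0)
  have "(\<Sum>k<m. (\<Sum>i<n. (g i * b i k)\<^sup>2) powr (q/2)) \<le> (\<Sum>k<m. (P k powr (1/2) * Q k powr (1/2)) powr (q/2))"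
    unfolding P_def Q_def using q s0 sb
    by (intro sum_mono powr_mono2 sum_square_le_weighted_quartic) (auto intro: sum_nonneg)
  also have "\<dots> = (\<Sum>k<m. (P k powr (q/2)) powr (1/2) * (Q k powr (q/2)) powr (1/2))"
    using P0 Q0 by (simp add: powr_mult powr_powr mult.commute)
  also have "\<dots> \<le> (\<Sum>k<m. ((P k powr (q/2)) powr (1/2)) powr 2) powr (1/2)
      * (\<Sum>k<m. ((Q k powr (q/2)) powr (1/2)) powr 2) powr (1/2)"
    by (rule Cauchy_Schwarz_sum_powr) auto
  also have "\<dots> = (\<Sum>k<m. P k powr (q/2)) powr (1/2) * (\<Sum>k<m. Q k powr (q/2)) powr (1/2)"
    by (simp add: powr_powr)
  finally show ?thesis unfolding P_def Q_def .
qed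

subsection \<open>Standard Gaussian vectors\<close>

lemma prob_space_gauss_vec: "prob_space (gauss_vec n)"
  unfolding gauss_vec_def
  by (intro prob_space_PiM) (simp add: real_distribution.axioms(1) real_dist_normal_dist)

lemma gauss_vec_component_measurable [measurable]:
  assumes "i \<in> {..<n}"
  shows "(\<lambda>\<omega>. \<omega> i) \<in> borel_measurable (gauss_vec n)"
proof -
  have "(\<lambda>\<omega>. \<omega> i) \<in> measurable (PiM {..<n} (\<lambda>_. std_normal_distribution)) std_normal_distribution"
    using assms by (rule measurable_component_singleton)
  then show ?thesis unfolding gauss_vec_def by (simp add: measurable_def)
qed

lemma distr_gauss_vec_component:
  assumes "i < n"
  shows "distr (gauss_vec n) borel (\<lambda>\<omega>. \<omega> i) = std_normal_distribution"
proof -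
  have "distr (gauss_vec n) borel (\<lambda>\<omega>. \<omega> i) = distr (gauss_vec n) std_normal_distribution (\<lambda>\<omega>. \<omega> i)"
    by (rule distr_cong) auto
  also have "\<dots> = std_normal_distribution"
    unfolding gauss_vec_def using assms
    by (subst distr_PiM_component) (auto simp: real_distribution.axioms(1) real_dist_normal_dist)
  finally show ?thesis .
qed

lemma nn_integral_gauss_vec_component:
  assumes "i < n" and "h \<in> borel_measurable borel"
  shows "(\<integral>\<^sup>+\<omega>. h (\<omega> i) \<partial>gauss_vec n) = (\<integral>\<^sup>+x. h x \<partial>std_normal_distribution)"
  using assms by (simp add: nn_integral_distr flip: distr_gauss_vec_component)

lemma gauss_vec_component_distributed:
  assumes "i < n"
  shows "distributed (gauss_vec n) lborel (\<lambda>\<omega>. \<omega> i) (\<lambda>x. ennreal (normal_density 0 1 x))"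
proof -
  have "distr (gauss_vec n) lborel (\<lambda>\<omega>. \<omega> i) = distr (gauss_vec n) borel (\<lambda>\<omega>. \<omega> i)"
    by (rule distr_cong) auto
  then show ?thesis
    using assms by (simp add: distributed_def distr_gauss_vec_component)
qed

lemma indep_vars_gauss_vec:
  assumes "I \<subseteq> {..<n}" and "I \<noteq> {}"
  shows "prob_space.indep_vars (gauss_vec n) (\<lambda>_. borel) (\<lambda>i \<omega>. \<omega> i) I"
proof -
  interpret prob_space "gauss_vec n" by (rule prob_space_gauss_vec)
  have "distr (gauss_vec n) (PiM {..<n} (\<lambda>_. borel)) (\<lambda>x. \<lambda>i\<in>{..<n}. x i)
      = distr (gauss_vec n) (gauss_vec n) (\<lambda>x. x)"
  proof (rule distr_cong)
    show "sets (PiM {..<n} (\<lambda>_. borel)) = sets (gauss_vec n)"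
      unfolding gauss_vec_def by (rule sets_PiM_cong) auto
    fix x assume "x \<in> space (gauss_vec n)"
    then show "(\<lambda>i\<in>{..<n}. x i) = x"
      unfolding gauss_vec_def by (auto simp: space_PiM PiE_def extensional_def restrict_def)
  qed auto
  also have "\<dots> = PiM {..<n} (\<lambda>_. std_normal_distribution)"
    by (simp add: gauss_vec_def)
  also have "\<dots> = PiM {..<n} (\<lambda>i. distr (gauss_vec n) borel (\<lambda>\<omega>. \<omega> i))"
    by (rule PiM_cong) (simp_all add: distr_gauss_vec_component)
  finally have "indep_vars (\<lambda>_. borel) (\<lambda>i \<omega>. \<omega> i) {..<n}"
    using assms by (subst indep_vars_iff_distr_eq_PiM') auto
  then show ?thesis
    using assms(1) by (rule indep_vars_subset)
qed

text \<open>Since enn2real maps \<infinity> to 0, this is only meaningful once the moment is known to be finite,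
  which nn_integral_std_normal_abs_powr establishes for r > 0.\<close>

definition std_normal_abs_moment :: "real \<Rightarrow> real" where
  "std_normal_abs_moment r = enn2real (\<integral>\<^sup>+x. ennreal (\<bar>x\<bar> powr r) \<partial>std_normal_distribution)"

lemma std_normal_abs_moment_nonneg [simp]: "0 \<le> std_normal_abs_moment r"
  by (simp add: std_normal_abs_moment_def)

lemma nn_integral_std_normal_abs_powr:
  assumes r: "0 < r"
  shows "(\<integral>\<^sup>+x. ennreal (\<bar>x\<bar> powr r) \<partial>std_normal_distribution) = ennreal (std_normal_abs_moment r)"
proof -
  interpret prob_space std_normal_distribution
    using real_dist_normal_dist real_distribution.axioms(1) by blast
  define N where "N = nat \<lceil>r\<rceil>"
  have N: "0 < N" "r \<le> real (2 * N)" unfolding N_def using r by linarith+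
  have "(\<integral>\<^sup>+x. ennreal (\<bar>x\<bar> powr r) \<partial>std_normal_distribution)
      \<le> (\<integral>\<^sup>+x. 1 + ennreal (norm (x ^ (2 * N))) \<partial>std_normal_distribution)"
  proof (rule nn_integral_mono)
    fix x :: real
    have "\<bar>x\<bar> powr real (2 * N) = norm (x ^ (2 * N))"
    proof (cases "x = 0")
      case False
      then have "\<bar>x\<bar> powr real (2 * N) = \<bar>x\<bar> ^ (2 * N)" by (intro powr_realpow) simp
      then show ?thesis by (simp add: power_abs)
    qed (use N in simp)
    then have "\<bar>x\<bar> powr r \<le> 1 + norm (x ^ (2 * N))"
      using r N by (metis abs_ge_zero powr_le_one_plus_powr)
    then show "ennreal (\<bar>x\<bar> powr r) \<le> 1 + ennreal (norm (x ^ (2 * N)))"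
      by (metis ennreal_1 ennreal_leI ennreal_plus norm_ge_zero zero_le_one)
  qed
  also have "\<dots> = 1 + (\<integral>\<^sup>+x. ennreal (norm (x ^ (2 * N))) \<partial>std_normal_distribution)"
    using emeasure_space_1 by (subst nn_integral_add) auto
  also have "\<dots> < \<infinity>"
    using integrable_std_normal_distribution_moment[of "2 * N"]
    by (simp add: integrable_iff_bounded)
  finally show ?thesis
    by (simp add: std_normal_abs_moment_def less_top[symmetric])
qed

lemma gauss_vec_unit_linear_distributed:
  fixes c :: "nat \<Rightarrow> real"
  assumes unit: "(\<Sum>i<n. (c i)\<^sup>2) = 1"
  shows "distributed (gauss_vec n) lborel (\<lambda>\<omega>. \<Sum>i<n. c i * \<omega> i) (normal_density 0 1)"
proof -
  interpret prob_space "gauss_vec n" by (rule prob_space_gauss_vec)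
  define I where "I = {i\<in>{..<n}. c i \<noteq> 0}"
  have sum_I: "(\<Sum>i\<in>I. f i) = (\<Sum>i<n. f i)" if "\<And>i. c i = 0 \<Longrightarrow> f i = 0" for f :: "nat \<Rightarrow> real"
    by (rule sum.mono_neutral_left) (auto simp: I_def that)
  have "I \<noteq> {}"
  proof
    assume "I = {}"
    then have "\<forall>i<n. c i = 0" unfolding I_def by auto
    then show False using unit by simp
  qed
  define X where "X = (\<lambda>i (\<omega> :: nat \<Rightarrow> real). c i * \<omega> i)"
  have distr_X: "distributed (gauss_vec n) lborel (X i) (normal_density 0 \<bar>c i\<bar>)" if "i \<in> I" for i
  proof -
    have "i < n" "c i \<noteq> 0" using that by (auto simp: I_def)
    from normal_density_affine[OF gauss_vec_component_distributed[OF this(1)] zero_less_one this(2),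
        where \<beta> = 0]
    show ?thesis by (simp add: X_def)
  qed
  have "indep_vars (\<lambda>_. borel) (\<lambda>i \<omega>. \<omega> i) I"
    using \<open>I \<noteq> {}\<close> by (intro indep_vars_gauss_vec) (auto simp: I_def)
  from indep_vars_compose2[OF this, of "\<lambda>i x. c i * x" "\<lambda>_. borel"]
  have indep_X: "indep_vars (\<lambda>_. borel) X I" by (simp add: X_def)
  have "(\<Sum>i\<in>I. \<bar>c i\<bar>\<^sup>2) = 1" using unit by (simp add: sum_I)
  with sum_indep_normal[OF _ \<open>I \<noteq> {}\<close> indep_X _ distr_X]
  have "distributed (gauss_vec n) lborel (\<lambda>\<omega>. \<Sum>i\<in>I. X i \<omega>) (normal_density 0 1)"
    by (simp add: I_def)
  moreover have "(\<lambda>\<omega>. \<Sum>i\<in>I. X i \<omega>) = (\<lambda>\<omega>. \<Sum>i<n. c i * \<omega> i)"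
    by (simp add: X_def sum_I)
  ultimately show ?thesis by simp
qed

lemma nn_integral_gauss_vec_linear_powr:
  fixes c :: "nat \<Rightarrow> real"
  assumes r: "0 < r"
  shows "(\<integral>\<^sup>+\<omega>. ennreal (\<bar>\<Sum>i<n. c i * \<omega> i\<bar> powr r) \<partial>gauss_vec n)
     = ennreal ((\<Sum>i<n. (c i)\<^sup>2) powr (r/2) * std_normal_abs_moment r)"
proof -
  define \<sigma> where "\<sigma> = sqrt (\<Sum>i<n. (c i)\<^sup>2)"
  have \<sigma>0: "0 \<le> \<sigma>" unfolding \<sigma>_def by (simp add: sum_nonneg)
  have \<sigma>r: "\<sigma> powr r = (\<Sum>i<n. (c i)\<^sup>2) powr (r/2)"
    unfolding \<sigma>_def by (simp add: sum_nonneg powr_half_sqrt[symmetric] powr_powr)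
  show ?thesis
  proof (cases "\<sigma> = 0")
    case True
    then have "\<forall>i\<in>{..<n}. (c i)\<^sup>2 = 0"
      unfolding \<sigma>_def by (subst sum_nonneg_eq_0_iff[symmetric]) auto
    then show ?thesis using True \<sigma>r by simp
  next
    case False
    then have \<sigma>p: "\<sigma> > 0" using \<sigma>0 by simp
    define Z where "Z \<omega> = (\<Sum>i<n. c i / \<sigma> * \<omega> i)" for \<omega> :: "nat \<Rightarrow> real"
    have "(\<Sum>i<n. (c i / \<sigma>)\<^sup>2) = 1"
      using \<sigma>p unfolding \<sigma>_def by (simp add: power_divide sum_divide_distrib[symmetric] sum_nonneg)
    then have std: "distributed (gauss_vec n) lborel Z (normal_density 0 1)"
      unfolding Z_def by (rule gauss_vec_unit_linear_distributed)
    have lin: "(\<Sum>i<n. c i * \<omega> i) = \<sigma> * Z \<omega>" for \<omega>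
      using \<sigma>p by (simp add: Z_def sum_distrib_left)
    have "(\<integral>\<^sup>+\<omega>. ennreal (\<bar>\<Sum>i<n. c i * \<omega> i\<bar> powr r) \<partial>gauss_vec n)
        = (\<integral>\<^sup>+\<omega>. ennreal (\<sigma> powr r) * ennreal (\<bar>Z \<omega>\<bar> powr r) \<partial>gauss_vec n)"
      using \<sigma>0 by (simp add: lin abs_mult powr_mult ennreal_mult)
    also have "\<dots> = ennreal (\<sigma> powr r) * (\<integral>\<^sup>+\<omega>. ennreal (\<bar>Z \<omega>\<bar> powr r) \<partial>gauss_vec n)"
      using std by (intro nn_integral_cmult) (auto simp: distributed_def)
    also have "(\<integral>\<^sup>+\<omega>. ennreal (\<bar>Z \<omega>\<bar> powr r) \<partial>gauss_vec n)
        = (\<integral>\<^sup>+x. ennreal (\<bar>x\<bar> powr r) \<partial>distr (gauss_vec n) lborel Z)"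
      using std by (subst nn_integral_distr) (auto simp: distributed_def)
    also have "\<dots> = (\<integral>\<^sup>+x. ennreal (\<bar>x\<bar> powr r) \<partial>std_normal_distribution)"
      using std by (simp add: distributed_def)
    finally show ?thesis
      using r \<sigma>r by (simp add: nn_integral_std_normal_abs_powr ennreal_mult)
  qed
qed

lemma nn_integral_gauss_vec_weighted_abs_powr:
  fixes w :: "nat \<Rightarrow> real"
  assumes w: "\<And>i. 0 \<le> w i" and R: "0 < R"
  shows "(\<integral>\<^sup>+\<omega>. ennreal (\<Sum>i<n. w i * \<bar>\<omega> i\<bar> powr R) \<partial>gauss_vec n)
     = ennreal ((\<Sum>i<n. w i) * std_normal_abs_moment R)"
proof -
  have "(\<integral>\<^sup>+\<omega>. ennreal (\<Sum>i<n. w i * \<bar>\<omega> i\<bar> powr R) \<partial>gauss_vec n)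
      = (\<integral>\<^sup>+\<omega>. (\<Sum>i<n. ennreal (w i * \<bar>\<omega> i\<bar> powr R)) \<partial>gauss_vec n)"
    using w by (intro nn_integral_cong) (simp add: sum_ennreal)
  also have "\<dots> = (\<Sum>i<n. \<integral>\<^sup>+\<omega>. ennreal (w i * \<bar>\<omega> i\<bar> powr R) \<partial>gauss_vec n)"
    by (rule nn_integral_sum) measurable
  also have "\<dots> = (\<Sum>i<n. ennreal (w i * std_normal_abs_moment R))"
  proof (rule sum.cong[OF refl])
    fix i assume "i \<in> {..<n}"
    then have "(\<integral>\<^sup>+\<omega>. ennreal (w i * \<bar>\<omega> i\<bar> powr R) \<partial>gauss_vec n)
        = (\<integral>\<^sup>+x. ennreal (w i) * ennreal (\<bar>x\<bar> powr R) \<partial>std_normal_distribution)"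
      using w by (subst nn_integral_gauss_vec_component[where h = "\<lambda>x. ennreal (w i * \<bar>x\<bar> powr R)"])
        (auto simp: ennreal_mult)
    also have "\<dots> = ennreal (w i * std_normal_abs_moment R)"
      using w R by (simp add: nn_integral_cmult nn_integral_std_normal_abs_powr ennreal_mult)
    finally show "(\<integral>\<^sup>+\<omega>. ennreal (w i * \<bar>\<omega> i\<bar> powr R) \<partial>gauss_vec n) = ennreal (w i * std_normal_abs_moment R)" .
  qed
  also have "\<dots> = ennreal ((\<Sum>i<n. w i) * std_normal_abs_moment R)"
    using w by (simp add: sum_ennreal sum_distrib_right)
  finally show ?thesis .
qed

lemma nn_integral_gauss_vec_weighted_quartic_powr:
  fixes s :: "nat \<Rightarrow> real"
  assumes s0: "\<And>i. 0 \<le> s i" and r: "0 < r"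
  shows "(\<integral>\<^sup>+\<omega>. ennreal ((\<Sum>i<n. s i * \<omega> i ^ 4) powr r) \<partial>gauss_vec n)
     \<le> ennreal ((\<Sum>i<n. s i) powr r * (1 + std_normal_abs_moment (4 * max r 1)))"
proof -
  interpret prob_space "gauss_vec n" by (rule prob_space_gauss_vec)
  define S where "S = (\<Sum>i<n. s i)"
  define R where "R = 4 * max r 1"
  have S0: "0 \<le> S" unfolding S_def by (simp add: sum_nonneg s0)
  show ?thesis
  proof (cases "S = 0")
    case True
    then have "\<forall>i\<in>{..<n}. s i = 0"
      unfolding S_def using s0 by (subst sum_nonneg_eq_0_iff[symmetric]) auto
    then show ?thesis by simp
  next
    case False
    then have Sp: "0 < S" using S0 by simp
    define w where "w i = S powr r * (s i / S)" for i
    have w0: "0 \<le> w i" for i unfolding w_def using s0 Sp by simp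
    have "(\<integral>\<^sup>+\<omega>. ennreal ((\<Sum>i<n. s i * \<omega> i ^ 4) powr r) \<partial>gauss_vec n)
        \<le> (\<integral>\<^sup>+\<omega>. ennreal (S powr r) + ennreal (\<Sum>i<n. w i * \<bar>\<omega> i\<bar> powr R) \<partial>gauss_vec n)"
    proof (rule nn_integral_mono)
      fix \<omega> :: "nat \<Rightarrow> real"
      have "(\<Sum>i<n. s i * \<omega> i ^ 4) = S * (\<Sum>i<n. s i / S * \<omega> i ^ 4)"
        using Sp by (simp add: sum_distrib_left)
      then have "(\<Sum>i<n. s i * \<omega> i ^ 4) powr r = S powr r * (\<Sum>i<n. s i / S * \<omega> i ^ 4) powr r"
        using Sp s0 by (simp add: powr_mult sum_nonneg)
      also have "\<dots> \<le> S powr r * (1 + (\<Sum>i<n. s i / S * \<bar>\<omega> i\<bar> powr R))"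
        using Sp s0 r unfolding R_def
        by (intro mult_left_mono weighted_quartic_powr_le) (auto simp: S_def sum_divide_distrib[symmetric])
      also have "\<dots> = S powr r + (\<Sum>i<n. w i * \<bar>\<omega> i\<bar> powr R)"
        by (simp add: w_def distrib_left sum_distrib_left mult.assoc)
      finally show "ennreal ((\<Sum>i<n. s i * \<omega> i ^ 4) powr r)
          \<le> ennreal (S powr r) + ennreal (\<Sum>i<n. w i * \<bar>\<omega> i\<bar> powr R)"
        using w0 by (simp add: ennreal_plus[symmetric] sum_nonneg ennreal_leI del: ennreal_plus)
    qed
    also have "\<dots> = ennreal (S powr r) + ennreal ((\<Sum>i<n. w i) * std_normal_abs_moment R)"
      using w0 by (simp add: nn_integral_add emeasure_space_1 nn_integral_gauss_vec_weighted_abs_powr R_def)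
    also have "(\<Sum>i<n. w i) = S powr r"
      using Sp by (simp add: w_def S_def sum_distrib_left[symmetric] sum_divide_distrib[symmetric])
    finally show ?thesis
      by (simp add: S_def R_def ennreal_plus[symmetric] distrib_left del: ennreal_plus)
  qed
qed

lemma nn_integral_gauss_vec_lq_norm:
  fixes c :: "nat \<Rightarrow> nat \<Rightarrow> real"
  assumes q: "1 \<le> q"
  shows "(\<integral>\<^sup>+\<omega>. ennreal ((\<Sum>k<m. \<bar>\<Sum>i<n. c i k * \<omega> i\<bar> powr q) powr (1/q)) \<partial>gauss_vec n)
     \<le> ennreal ((std_normal_abs_moment q * (\<Sum>k<m. (\<Sum>i<n. (c i k)\<^sup>2) powr (q/2))) powr (1/q))"
proof -
  interpret prob_space "gauss_vec n" by (rule prob_space_gauss_vec)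
  have "(\<integral>\<^sup>+\<omega>. ennreal (((\<Sum>k<m. \<bar>\<Sum>i<n. c i k * \<omega> i\<bar> powr q) powr (1/q)) powr q) \<partial>gauss_vec n)
      = (\<integral>\<^sup>+\<omega>. (\<Sum>k<m. ennreal (\<bar>\<Sum>i<n. c i k * \<omega> i\<bar> powr q)) \<partial>gauss_vec n)"
    using q by (intro nn_integral_cong) (simp add: powr_powr sum_nonneg sum_ennreal)
  also have "\<dots> = (\<Sum>k<m. \<integral>\<^sup>+\<omega>. ennreal (\<bar>\<Sum>i<n. c i k * \<omega> i\<bar> powr q) \<partial>gauss_vec n)"
    by (rule nn_integral_sum) measurable
  also have "\<dots> = (\<Sum>k<m. ennreal ((\<Sum>i<n. (c i k)\<^sup>2) powr (q/2) * std_normal_abs_moment q))"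
    using q by (intro sum.cong refl nn_integral_gauss_vec_linear_powr) auto
  also have "\<dots> = ennreal (std_normal_abs_moment q * (\<Sum>k<m. (\<Sum>i<n. (c i k)\<^sup>2) powr (q/2)))"
    by (simp add: sum_ennreal sum_distrib_left mult.commute)
  finally show ?thesis
    using q by (intro nn_integral_le_root_of_powr_bound) (auto intro!: mult_nonneg_nonneg sum_nonneg)
qed

subsection \<open>The decoupled Gaussian chaos\<close>

lemma sum_trilinear_eq:
  fixes a :: "nat \<Rightarrow> nat \<Rightarrow> nat \<Rightarrow> real"
  shows "(\<Sum>i<n. \<Sum>j<n. \<Sum>k<m. a i j k * g i * g' i * x j * t k)
    = (\<Sum>k<m. t k * (\<Sum>i<n. (g i * (\<Sum>j<n. a i j k * x j)) * g' i))"
proof -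
  have "(\<Sum>i<n. \<Sum>j<n. \<Sum>k<m. a i j k * g i * g' i * x j * t k)
      = (\<Sum>k<m. \<Sum>i<n. \<Sum>j<n. a i j k * g i * g' i * x j * t k)"
    by (subst sum.swap) (intro sum.cong refl sum.swap)
  then show ?thesis
    by (simp add: sum_distrib_left sum_distrib_right mult_ac)
qed

definition quartic_form ::
    "nat \<Rightarrow> nat \<Rightarrow> real \<Rightarrow> (nat \<Rightarrow> nat \<Rightarrow> nat \<Rightarrow> real) \<Rightarrow> (nat \<Rightarrow> real) \<Rightarrow> real" where
  "quartic_form n m q a g = (\<Sum>k<m. (\<Sum>i<n. (\<Sum>j<n. (a i j k)\<^sup>2) * g i ^ 4) powr (q/2))"

lemma quartic_form_nonneg: "0 \<le> quartic_form n m q a g"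
  unfolding quartic_form_def by (auto intro: sum_nonneg)

lemma quartic_form_measurable [measurable]:
  "quartic_form n m q a \<in> borel_measurable (gauss_vec n)"
  unfolding quartic_form_def by measurable

lemma sum_powr_variance_le_quartic_form_phi_A:
  fixes a :: "nat \<Rightarrow> nat \<Rightarrow> nat \<Rightarrow> real" and g x :: "nat \<Rightarrow> real"
  assumes q: "1 \<le> q"
  shows "(\<Sum>k<m. (\<Sum>i<n. (g i * (\<Sum>j<n. a i j k * x j))\<^sup>2) powr (q/2))
     \<le> quartic_form n m q a g powr (1/2) * phi_A n m q a x powr q"
proof -
  define b where "b i k = (\<Sum>j<n. a i j k * x j)" for i k
  define s where "s i k = (\<Sum>j<n. (a i j k)\<^sup>2)" for i k
  have s0: "0 \<le> s i k" for i k unfolding s_def by (auto intro: sum_nonneg)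
  have sb: "b i k = 0" if "s i k = 0" for i k
  proof -
    have "\<forall>j\<in>{..<n}. (a i j k)\<^sup>2 = 0"
      using that unfolding s_def by (subst sum_nonneg_eq_0_iff[symmetric]) auto
    then show ?thesis unfolding b_def by simp
  qed
  have "phi_A n m q a x powr q
      = (\<Sum>k<m. (\<Sum>i\<in>{i\<in>{..<n}. s i k \<noteq> 0}. b i k ^ 4 / s i k) powr (q/2)) powr (1/2)"
    unfolding phi_A_def b_def s_def using q by (simp add: powr_powr)
  moreover have "quartic_form n m q a g = (\<Sum>k<m. (\<Sum>i<n. s i k * g i ^ 4) powr (q/2))"
    unfolding quartic_form_def s_def ..
  ultimately show ?thesis
    using sum_powr_sum_square_le_weighted_quartic[OF q s0 sb, where m = m and n = n and g = g]
    by (simp add: b_def)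
qed

lemma nn_integral_SUP_conj_ball_le:
  fixes a :: "nat \<Rightarrow> nat \<Rightarrow> nat \<Rightarrow> real" and g x :: "nat \<Rightarrow> real"
  assumes q: "1 \<le> q"
  shows "(\<integral>\<^sup>+g'. (SUP t\<in>conj_ball m q. ennreal (\<Sum>i<n. \<Sum>j<n. \<Sum>k<m. a i j k * g i * g' i * x j * t k)) \<partial>gauss_vec n)
     \<le> ennreal (std_normal_abs_moment q powr (1/q) * quartic_form n m q a g powr (1/(2*q)) * phi_A n m q a x)"
proof -
  define b where "b i k = (\<Sum>j<n. a i j k * x j)" for i k
  define M where "M = std_normal_abs_moment q"
  define G where "G = quartic_form n m q a g"
  define \<phi> where "\<phi> = phi_A n m q a x"
  have G0: "0 \<le> G" and \<phi>0: "0 \<le> \<phi>"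
    unfolding G_def \<phi>_def phi_A_def by (simp_all add: quartic_form_nonneg)
  have sup_le: "(SUP t\<in>conj_ball m q. ennreal (\<Sum>i<n. \<Sum>j<n. \<Sum>k<m. a i j k * g i * g' i * x j * t k))
      \<le> ennreal ((\<Sum>k<m. \<bar>\<Sum>i<n. (g i * b i k) * g' i\<bar> powr q) powr (1/q))" for g'
  proof (rule SUP_least)
    fix t assume t: "t \<in> conj_ball m q"
    have "(\<Sum>i<n. \<Sum>j<n. \<Sum>k<m. a i j k * g i * g' i * x j * t k) = (\<Sum>k<m. t k * (\<Sum>i<n. (g i * b i k) * g' i))"
      unfolding b_def by (rule sum_trilinear_eq)
    also have "\<dots> \<le> (\<Sum>k<m. \<bar>\<Sum>i<n. (g i * b i k) * g' i\<bar> powr q) powr (1/q)"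
      by (rule sum_mult_le_lq_norm_conj_ball[OF q t])
    finally show "ennreal (\<Sum>i<n. \<Sum>j<n. \<Sum>k<m. a i j k * g i * g' i * x j * t k)
        \<le> ennreal ((\<Sum>k<m. \<bar>\<Sum>i<n. (g i * b i k) * g' i\<bar> powr q) powr (1/q))"
      by (rule ennreal_leI)
  qed
  have split: "(\<Sum>k<m. (\<Sum>i<n. (g i * b i k)\<^sup>2) powr (q/2)) \<le> G powr (1/2) * \<phi> powr q"
    unfolding b_def G_def \<phi>_def by (rule sum_powr_variance_le_quartic_form_phi_A[OF q])
  have "(M * (\<Sum>k<m. (\<Sum>i<n. (g i * b i k)\<^sup>2) powr (q/2))) powr (1/q) \<le> (M * (G powr (1/2) * \<phi> powr q)) powr (1/q)"
    using split q unfolding M_def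
    by (intro powr_mono2 mult_left_mono) (auto intro!: mult_nonneg_nonneg sum_nonneg)
  also have "\<dots> = M powr (1/q) * G powr (1/(2*q)) * \<phi>"
    using q G0 \<phi>0 unfolding M_def by (simp add: powr_mult powr_powr)
  finally have real_bound: "(M * (\<Sum>k<m. (\<Sum>i<n. (g i * b i k)\<^sup>2) powr (q/2))) powr (1/q)
      \<le> M powr (1/q) * G powr (1/(2*q)) * \<phi>" .
  have "(\<integral>\<^sup>+g'. (SUP t\<in>conj_ball m q. ennreal (\<Sum>i<n. \<Sum>j<n. \<Sum>k<m. a i j k * g i * g' i * x j * t k)) \<partial>gauss_vec n)
      \<le> (\<integral>\<^sup>+g'. ennreal ((\<Sum>k<m. \<bar>\<Sum>i<n. (g i * b i k) * g' i\<bar> powr q) powr (1/q)) \<partial>gauss_vec n)"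
    by (intro nn_integral_mono sup_le)
  also have "\<dots> \<le> ennreal ((M * (\<Sum>k<m. (\<Sum>i<n. (g i * b i k)\<^sup>2) powr (q/2))) powr (1/q))"
    unfolding M_def by (rule nn_integral_gauss_vec_lq_norm[OF q])
  also have "\<dots> \<le> ennreal (M powr (1/q) * G powr (1/(2*q)) * \<phi>)"
    using real_bound by (rule ennreal_leI)
  finally show ?thesis unfolding M_def G_def \<phi>_def .
qed

lemma nn_integral_quartic_form_le:
  assumes q: "1 \<le> q"
  shows "(\<integral>\<^sup>+g. ennreal (quartic_form n m q a g) \<partial>gauss_vec n)
     \<le> ennreal ((1 + std_normal_abs_moment (4 * max (q/2) 1)) * W_A n m q a powr q)"
proof -
  define K where "K = 1 + std_normal_abs_moment (4 * max (q/2) 1)"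
  have "(\<integral>\<^sup>+g. ennreal (quartic_form n m q a g) \<partial>gauss_vec n)
      = (\<integral>\<^sup>+g. (\<Sum>k<m. ennreal ((\<Sum>i<n. (\<Sum>j<n. (a i j k)\<^sup>2) * g i ^ 4) powr (q/2))) \<partial>gauss_vec n)"
    unfolding quartic_form_def by (intro nn_integral_cong) (simp add: sum_ennreal)
  also have "\<dots> = (\<Sum>k<m. \<integral>\<^sup>+g. ennreal ((\<Sum>i<n. (\<Sum>j<n. (a i j k)\<^sup>2) * g i ^ 4) powr (q/2)) \<partial>gauss_vec n)"
    by (rule nn_integral_sum) measurable
  also have "\<dots> \<le> (\<Sum>k<m. ennreal ((\<Sum>i<n. \<Sum>j<n. (a i j k)\<^sup>2) powr (q/2) * K))"
    unfolding K_def using q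
    by (intro sum_mono nn_integral_gauss_vec_weighted_quartic_powr) (auto intro: sum_nonneg)
  also have "\<dots> = ennreal (K * (\<Sum>k<m. (\<Sum>i<n. \<Sum>j<n. (a i j k)\<^sup>2) powr (q/2)))"
    unfolding K_def by (simp add: sum_ennreal sum_distrib_left mult.commute)
  also have "(\<Sum>k<m. (\<Sum>i<n. \<Sum>j<n. (a i j k)\<^sup>2) powr (q/2)) = W_A n m q a powr q"
    unfolding W_A_def using q by (simp add: powr_powr sum_nonneg)
  finally show ?thesis unfolding K_def .
qed

lemma nn_integral_quartic_form_root_le:
  assumes q: "1 \<le> q"
  shows "(\<integral>\<^sup>+g. ennreal (quartic_form n m q a g powr (1/(2*q))) \<partial>gauss_vec n)
     \<le> ennreal ((1 + std_normal_abs_moment (4 * max (q/2) 1)) powr (1/(2*q)) * sqrt (W_A n m q a))"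
proof -
  interpret prob_space "gauss_vec n" by (rule prob_space_gauss_vec)
  define K where "K = 1 + std_normal_abs_moment (4 * max (q/2) 1)"
  define W where "W = W_A n m q a"
  have K0: "0 \<le> K" and W0: "0 \<le> W" unfolding K_def W_def W_A_def by simp_all
  have "(\<integral>\<^sup>+g. ennreal ((quartic_form n m q a g powr (1/(2*q))) powr (2*q)) \<partial>gauss_vec n)
      = (\<integral>\<^sup>+g. ennreal (quartic_form n m q a g) \<partial>gauss_vec n)"
    using q by (intro nn_integral_cong) (simp add: powr_powr quartic_form_nonneg)
  also have "\<dots> \<le> ennreal (K * W powr q)"
    unfolding K_def W_def using q by (rule nn_integral_quartic_form_le)
  finally have "(\<integral>\<^sup>+g. ennreal (quartic_form n m q a g powr (1/(2*q))) \<partial>gauss_vec n)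
      \<le> ennreal ((K * W powr q) powr (1/(2*q)))"
    using q K0 W0 by (intro nn_integral_le_root_of_powr_bound) auto
  also have "(K * W powr q) powr (1/(2*q)) = K powr (1/(2*q)) * sqrt W"
    using q K0 W0 by (simp add: powr_mult powr_powr powr_half_sqrt[symmetric])
  finally show ?thesis unfolding K_def W_def .
qed

theorem lemma5p1:
  "\<forall>q::real. q \<ge> 1 \<longrightarrow> (\<exists>C::real. \<forall>(p::real) (n::nat) (m::nat)
      (a::nat \<Rightarrow> nat \<Rightarrow> nat \<Rightarrow> real) (U::(nat \<Rightarrow> real) set).
     p > 0 \<longrightarrow> U \<subseteq> ball2_plus_ball1 n p \<longrightarrow>
     (\<integral>\<^sup>+ g. (SUP x\<in>U. \<integral>\<^sup>+ g'. (SUP t\<in>conj_ball m q.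
            ennreal (\<Sum>i<n. \<Sum>j<n. \<Sum>k<m. a i j k * g i * g' i * x j * t k)) \<partial>gauss_vec n) \<partial>gauss_vec n)
     \<le> ennreal (C * sqrt (W_A n m q a)) * (SUP x\<in>U. ennreal (phi_A n m q a x)))"
proof (intro allI impI exI)
  fix q :: real and n m :: nat and a :: "nat \<Rightarrow> nat \<Rightarrow> nat \<Rightarrow> real" and U :: "(nat \<Rightarrow> real) set"
  assume q: "1 \<le> q"
  define c1 where "c1 = std_normal_abs_moment q powr (1/q)"
  define c2 where "c2 = (1 + std_normal_abs_moment (4 * max (q/2) 1)) powr (1/(2*q))"
  define G where "G g = quartic_form n m q a g powr (1/(2*q))" for g
  let ?\<Phi> = "SUP x\<in>U. ennreal (phi_A n m q a x)"
  have "(\<integral>\<^sup>+ g. (SUP x\<in>U. \<integral>\<^sup>+ g'. (SUP t\<in>conj_ball m q.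
            ennreal (\<Sum>i<n. \<Sum>j<n. \<Sum>k<m. a i j k * g i * g' i * x j * t k)) \<partial>gauss_vec n) \<partial>gauss_vec n)
      \<le> (\<integral>\<^sup>+ g. ennreal c1 * ennreal (G g) * ?\<Phi> \<partial>gauss_vec n)" (is "?L \<le> _")
  proof (intro nn_integral_mono SUP_least)
    fix g x assume "x \<in> U"
    then have "ennreal (c1 * G g * phi_A n m q a x) \<le> ennreal c1 * ennreal (G g) * ?\<Phi>"
      unfolding c1_def G_def by (auto simp: ennreal_mult phi_A_def intro!: mult_left_mono SUP_upper)
    with nn_integral_SUP_conj_ball_le[OF q]
    show "(\<integral>\<^sup>+ g'. (SUP t\<in>conj_ball m q.
            ennreal (\<Sum>i<n. \<Sum>j<n. \<Sum>k<m. a i j k * g i * g' i * x j * t k)) \<partial>gauss_vec n)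
        \<le> ennreal c1 * ennreal (G g) * ?\<Phi>"
      unfolding c1_def G_def by (rule order_trans)
  qed
  also have "\<dots> = ennreal c1 * (\<integral>\<^sup>+ g. ennreal (G g) \<partial>gauss_vec n) * ?\<Phi>"
    unfolding G_def by (simp add: nn_integral_multc nn_integral_cmult)
  also have "\<dots> \<le> ennreal c1 * ennreal (c2 * sqrt (W_A n m q a)) * ?\<Phi>"
    unfolding G_def c2_def using q
    by (intro mult_right_mono mult_left_mono nn_integral_quartic_form_root_le) auto
  also have "\<dots> = ennreal (c1 * c2 * sqrt (W_A n m q a)) * ?\<Phi>"
    unfolding c1_def c2_def by (simp add: ennreal_mult' mult.assoc)
  finally show "?L \<le> ennreal (c1 * c2 * sqrt (W_A n m q a)) * ?\<Phi>" .
qed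

end
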